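(* Let $n\ge 3$, $d\ge 1$, and set $c=\frac{3.9d}{n+2}$. For every integer $r$ with $c<r<1.1c$, the number of counter-points $p\in[n]^d$ with $\tau_1(p)=r$ is at least \[\left(1-2de^{-d/(40000(n+2))}\right)\binom{d}{r}2^r(n-2)^{d-r}.\]
   Context: Let $[n]=\{1,\dots,n\}$. For $p\in[n]^d$ and $i\in[n]$ let $\pi_i(p)=|\{j\in[d]:p_j=i\}|$ and $\tau_1(p)=\pi_1(p)+\pi_n(p)$. A point $p\in[n]^d$ is a counter-point if $c<\tau_1(p)<1.1c$ and $\frac{0.99(d-\tau_1(p))}{n-2}\le\pi_i(p)\le\frac{1.01(d-\tau_1(p))}{n-2}$ for all $1<i<n$. *)

theory Defs
  imports "HOL-Analysis.Analysis"
begin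

definition grid :: "nat \<Rightarrow> nat \<Rightarrow> (nat \<Rightarrow> nat) set" where
  "grid n d = ({1..d} \<rightarrow>\<^sub>E {1..n})"

definition pi_cnt :: "nat \<Rightarrow> (nat \<Rightarrow> nat) \<Rightarrow> nat \<Rightarrow> nat" where
  "pi_cnt d p i = card {j \<in> {1..d}. p j = i}"

definition tau1 :: "nat \<Rightarrow> nat \<Rightarrow> (nat \<Rightarrow> nat) \<Rightarrow> nat" where
  "tau1 n d p = pi_cnt d p 1 + pi_cnt d p n"

definition counter_point :: "nat \<Rightarrow> nat \<Rightarrow> real \<Rightarrow> (nat \<Rightarrow> nat) \<Rightarrow> bool" where
  "counter_point n d c p \<longleftrightarrow>
     p \<in> grid n d \<and>
     c < real (tau1 n d p) \<and> real (tau1 n d p) < 1.1 * c \<and>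
     (\<forall>i. 1 < i \<and> i < n \<longrightarrow>
        0.99 * (real d - real (tau1 n d p)) / (real n - 2) \<le> real (pi_cnt d p i) \<and>
        real (pi_cnt d p i) \<le> 1.01 * (real d - real (tau1 n d p)) / (real n - 2))"

end

theory Submission
  imports Defs
begin

(*
  Classify the points of [n]^d by the set A of coordinates taking an extreme value 1 or n.
  The points with tau_1 = r are exactly those with |A| = r, so for any weight w on [n]
  the sum over them of prod_j w(p_j) factorises as C(d,r) (w 1 + w n)^r (sum_{1<v<n} w v)^(d-r).
  With w = x at a middle value i and 1 elsewhere this is the moment generating function
  C(d,r) 2^r (n - 3 + x)^(d-r) of pi_i, and Markov's inequality for x^pi_i with x = 0.99
  and x = 1.01 (Chernoff) shows that pi_i leaves [0.99 mu, 1.01 mu], mu = (d - r)/(n - 2),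
  on at most a fraction exp(-0.0000394 mu) of the layer in each direction.  Since
  r < 1.1 c is small compared to d, this exponent is at least d/(40000 (n + 2)), and a union
  bound over the n - 2 middle values gives the claim when n - 2 <= d; otherwise
  d/(40000 (n + 2)) <= 1/2 and the claimed lower bound is negative.
*)

definition tau1_layer :: "nat \<Rightarrow> nat \<Rightarrow> nat \<Rightarrow> (nat \<Rightarrow> nat) set" where
  "tau1_layer n d r = {p \<in> grid n d. tau1 n d p = r}"

definition balanced :: "nat \<Rightarrow> nat \<Rightarrow> (nat \<Rightarrow> nat) \<Rightarrow> bool" where
  "balanced n d p \<longleftrightarrow> (\<forall>i. 1 < i \<and> i < n \<longrightarrow>
     0.99 * (real d - real (tau1 n d p)) / (real n - 2) \<le> real (pi_cnt d p i) \<and>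
     real (pi_cnt d p i) \<le> 1.01 * (real d - real (tau1 n d p)) / (real n - 2))"

lemma counter_point_iff:
  "counter_point n d c p \<longleftrightarrow>
     p \<in> grid n d \<and> c < real (tau1 n d p) \<and> real (tau1 n d p) < 1.1 * c \<and> balanced n d p"
  unfolding counter_point_def balanced_def by blast

lemma tau1_eq_card:
  assumes "n \<noteq> 1"
  shows "tau1 n d p = card {j \<in> {1..d}. p j \<in> {1, n}}"
proof -
  have "{j \<in> {1..d}. p j \<in> {1, n}} = {j \<in> {1..d}. p j = 1} \<union> {j \<in> {1..d}. p j = n}"
    by auto
  then show ?thesis
    using assms unfolding tau1_def pi_cnt_def by (simp add: card_Un_disjoint disjoint_iff)
qed

lemma extreme_coords_PiE:
  fixes n d :: nat
  assumes "n \<ge> 2" "A \<subseteq> {1..d}"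
    and "p \<in> PiE {1..d} (\<lambda>j. if j \<in> A then {1, n} else {2..<n})"
  shows "{j \<in> {1..d}. p j \<in> {1, n}} = A"
proof -
  have "p j \<in> {1, n} \<longleftrightarrow> j \<in> A" if "j \<in> {1..d}" for j
    using PiE_mem[OF assms(3) that] assms(1) by (auto split: if_splits)
  then show ?thesis
    using assms(2) by blast
qed

lemma tau1_layer_eq_UN:
  assumes "n \<ge> 2"
  shows "tau1_layer n d r =
    (\<Union>A \<in> {A. A \<subseteq> {1..d} \<and> card A = r}. PiE {1..d} (\<lambda>j. if j \<in> A then {1, n} else {2..<n}))"
    (is "_ = (\<Union>A \<in> _. ?P A)")
proof (intro equalityI subsetI)
  fix p assume p: "p \<in> tau1_layer n d r"
  define A where "A = {j \<in> {1..d}. p j \<in> {1, n}}"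
  have p_grid: "p \<in> {1..d} \<rightarrow>\<^sub>E {1..n}" and "tau1 n d p = r"
    using p by (simp_all add: tau1_layer_def grid_def)
  have "card A = tau1 n d p"
    unfolding A_def using assms by (intro tau1_eq_card[symmetric]) simp
  with \<open>tau1 n d p = r\<close> have "card A = r"
    by simp
  moreover have "A \<subseteq> {1..d}"
    by (auto simp: A_def)
  ultimately have "A \<in> {A. A \<subseteq> {1..d} \<and> card A = r}"
    by simp
  moreover have "p \<in> ?P A"
  proof (rule PiE_I)
    fix j assume j: "j \<in> {1..d}"
    have "p j \<in> {1..n}"
      using PiE_mem[OF p_grid j] .
    moreover have "j \<in> A \<longleftrightarrow> p j \<in> {1, n}"
      using j by (simp add: A_def)
    ultimately have "p j \<in> {1, n} \<union> {2..<n}" "p j \<in> {1, n} \<longleftrightarrow> j \<in> A"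
      by (auto simp: atLeastLessThan_iff)
    then show "p j \<in> (if j \<in> A then {1, n} else {2..<n})"
      by auto
  next
    fix j assume "j \<notin> {1..d}"
    with p_grid show "p j = undefined"
      by (rule PiE_arb)
  qed
  ultimately show "p \<in> (\<Union>A \<in> {A. A \<subseteq> {1..d} \<and> card A = r}. ?P A)"
    by blast
next
  fix p assume "p \<in> (\<Union>A \<in> {A. A \<subseteq> {1..d} \<and> card A = r}. ?P A)"
  then obtain A where A: "A \<subseteq> {1..d}" "card A = r" "p \<in> ?P A" by blast
  have "tau1 n d p = card {j \<in> {1..d}. p j \<in> {1, n}}"
    using assms by (intro tau1_eq_card) simp
  also have "\<dots> = r"
    using extreme_coords_PiE[OF assms A(1,3)] A(2) by simp
  finally have "tau1 n d p = r" .
  moreover have "?P A \<subseteq> grid n d"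
    unfolding grid_def using assms by (intro PiE_mono) (simp add: subset_iff)
  ultimately show "p \<in> tau1_layer n d r"
    unfolding tau1_layer_def using A(3) by blast
qed

lemma sum_prod_PiE_if:
  fixes w :: "'a \<Rightarrow> 'b::comm_semiring_1"
  assumes "finite I" "A \<subseteq> I" "finite X" "finite Y"
  shows "(\<Sum>p \<in> PiE I (\<lambda>j. if j \<in> A then X else Y). \<Prod>j \<in> I. w (p j))
       = sum w X ^ card A * sum w Y ^ (card I - card A)"
proof -
  have "(\<Sum>p \<in> PiE I (\<lambda>j. if j \<in> A then X else Y). \<Prod>j \<in> I. w (p j))
      = (\<Prod>j \<in> I. sum w (if j \<in> A then X else Y))"
    using assms by (intro prod_sum_PiE[symmetric]) auto
  also have "\<dots> = (\<Prod>j \<in> I. if j \<in> A then sum w X else sum w Y)"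
    by (intro prod.cong) simp_all
  also have "\<dots> = (\<Prod>j \<in> I \<inter> {j. j \<in> A}. sum w X) * (\<Prod>j \<in> I \<inter> - {j. j \<in> A}. sum w Y)"
    using assms(1) by (rule prod.If_cases)
  also have "I \<inter> {j. j \<in> A} = A"
    using assms(2) by blast
  also have "I \<inter> - {j. j \<in> A} = I - A"
    by blast
  finally show ?thesis
    using assms(1,2) by (simp add: card_Diff_subset finite_subset)
qed

lemma sum_prod_tau1_layer:
  fixes w :: "nat \<Rightarrow> 'a::comm_semiring_1"
  assumes "n \<ge> 2"
  shows "(\<Sum>p \<in> tau1_layer n d r. \<Prod>j \<in> {1..d}. w (p j))
       = of_nat (d choose r) * (w 1 + w n) ^ r * (\<Sum>v \<in> {2..<n}. w v) ^ (d - r)"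
proof -
  let ?P = "\<lambda>A. PiE {1..d} (\<lambda>j. if j \<in> A then {1, n} else {2..<n})"
  let ?Sub = "{A. A \<subseteq> {1..d} \<and> card A = r}"
  have "finite ?Sub"
    by (rule finite_subset[of _ "Pow {1..d}"]) auto
  moreover have "\<forall>A \<in> ?Sub. finite (?P A)"
    by (auto intro!: finite_PiE)
  moreover have "\<forall>A \<in> ?Sub. \<forall>B \<in> ?Sub. A \<noteq> B \<longrightarrow> ?P A \<inter> ?P B = {}"
  proof (intro ballI impI equals0I)
    fix A B p assume "A \<in> ?Sub" "B \<in> ?Sub" "A \<noteq> B" "p \<in> ?P A \<inter> ?P B"
    then show False
      using extreme_coords_PiE[OF assms, of A d p] extreme_coords_PiE[OF assms, of B d p] by simp
  qed
  ultimately have "(\<Sum>p \<in> tau1_layer n d r. \<Prod>j \<in> {1..d}. w (p j))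
      = (\<Sum>A \<in> ?Sub. \<Sum>p \<in> ?P A. \<Prod>j \<in> {1..d}. w (p j))"
    unfolding tau1_layer_eq_UN[OF assms] by (rule sum.UNION_disjoint)
  also have "\<dots> = (\<Sum>A \<in> ?Sub. (w 1 + w n) ^ r * (\<Sum>v \<in> {2..<n}. w v) ^ (d - r))"
    using assms by (intro sum.cong) (simp_all add: sum_prod_PiE_if)
  finally show ?thesis
    using n_subsets[of "{1..d}" r] by (simp add: mult.assoc)
qed

lemma finite_tau1_layer: "finite (tau1_layer n d r)"
  by (rule finite_subset[of _ "{1..d} \<rightarrow>\<^sub>E {1..n}"])
    (auto simp: tau1_layer_def grid_def intro: finite_PiE)

lemma card_tau1_layer:
  assumes "n \<ge> 2"
  shows "real (card (tau1_layer n d r)) = real (d choose r) * 2 ^ r * (real n - 2) ^ (d - r)"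
  using sum_prod_tau1_layer[OF assms, of "\<lambda>_. 1 :: real" d r] assms by (simp add: of_nat_diff)

lemma sum_power_pi_cnt_tau1_layer:
  fixes x :: real
  assumes "1 < i" "i < n"
  shows "(\<Sum>p \<in> tau1_layer n d r. x ^ pi_cnt d p i)
       = real (d choose r) * 2 ^ r * (real n - 3 + x) ^ (d - r)"
proof -
  define w where "w v = (if v = i then x else 1)" for v
  have "(\<Prod>j \<in> {1..d}. w (p j)) = x ^ pi_cnt d p i" for p :: "nat \<Rightarrow> nat"
  proof -
    have "(\<Prod>j \<in> {1..d}. w (p j)) = (\<Prod>j \<in> {1..d} \<inter> {j. p j = i}. x) * (\<Prod>j \<in> {1..d} \<inter> - {j. p j = i}. 1)"
      unfolding w_def by (rule prod.If_cases) simp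
    also have "{1..d} \<inter> {j. p j = i} = {j \<in> {1..d}. p j = i}"
      by blast
    finally show ?thesis
      unfolding pi_cnt_def by simp
  qed
  moreover have "(\<Sum>v \<in> {2..<n}. w v) = real n - 3 + x"
  proof -
    have "(\<Sum>v \<in> {2..<n}. w v) = (\<Sum>v \<in> {2..<n}. 1 + (if v = i then x - 1 else 0))"
      unfolding w_def by (rule sum.cong) auto
    also have "\<dots> = real (n - 2) + (x - 1)"
      using assms by (simp add: sum.distrib)
    finally show ?thesis
      using assms by (simp add: of_nat_diff)
  qed
  moreover have "w 1 = 1" "w n = 1"
    using assms by (auto simp: w_def)
  ultimately show ?thesis
    using sum_prod_tau1_layer[of n w d r] assms by simp
qed

lemma card_le_exp_moment:
  fixes f :: "'a \<Rightarrow> nat" and x K :: real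
  assumes "finite S" "T \<subseteq> S" "x > 0"
    and "\<And>p. p \<in> T \<Longrightarrow> 0 \<le> (real (f p) - K) * ln x"
  shows "real (card T) \<le> exp (- K * ln x) * (\<Sum>p \<in> S. x ^ f p)"
proof -
  have exp_eq: "exp ((real (f p) - K) * ln x) = exp (- K * ln x) * x ^ f p" for p
  proof -
    have "exp ((real (f p) - K) * ln x) = exp (- K * ln x) * exp (real (f p) * ln x)"
      by (simp add: algebra_simps flip: exp_add)
    also have "exp (real (f p) * ln x) = x ^ f p"
      using assms(3) by (simp add: exp_of_nat_mult)
    finally show ?thesis .
  qed
  have "real (card T) = (\<Sum>p \<in> T. 1)"
    by simp
  also have "\<dots> \<le> (\<Sum>p \<in> T. exp ((real (f p) - K) * ln x))"
    using assms(4) by (intro sum_mono) simp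
  also have "\<dots> \<le> (\<Sum>p \<in> S. exp ((real (f p) - K) * ln x))"
    using assms(1,2) by (intro sum_mono2) auto
  also have "\<dots> = exp (- K * ln x) * (\<Sum>p \<in> S. x ^ f p)"
    by (simp add: exp_eq sum_distrib_left)
  finally show ?thesis .
qed

lemma power_le_exp_mult:
  fixes m y :: real
  assumes "m > 0" "m + y \<ge> 0"
  shows "(m + y) ^ k \<le> m ^ k * exp (real k * y / m)"
proof -
  have "m + y \<le> m * exp (y / m)"
    using exp_ge_add_one_self[of "y / m"] assms(1) by (simp add: field_simps)
  then have "(m + y) ^ k \<le> (m * exp (y / m)) ^ k"
    using assms(2) by (rule power_mono)
  also have "\<dots> = m ^ k * exp (real k * y / m)"
    by (simp add: power_mult_distrib flip: exp_of_nat_mult)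
  finally show ?thesis .
qed

lemma card_pi_cnt_tail:
  fixes x K :: real
  assumes "n \<ge> 3" "1 < i" "i < n" "x > 0" "T \<subseteq> tau1_layer n d r"
    and "\<And>p. p \<in> T \<Longrightarrow> 0 \<le> (real (pi_cnt d p i) - K) * ln x"
  shows "real (card T) \<le> real (card (tau1_layer n d r))
           * exp (real (d - r) * (x - 1) / (real n - 2) - K * ln x)"
proof -
  have "real (card T) \<le> exp (- K * ln x) * (real (d choose r) * 2 ^ r * ((real n - 2) + (x - 1)) ^ (d - r))"
    using card_le_exp_moment[of _ T x "\<lambda>p. pi_cnt d p i" K, OF finite_tau1_layer assms(5,4,6)]
    by (simp add: sum_power_pi_cnt_tau1_layer[OF assms(2,3)] algebra_simps)
  also have "\<dots> \<le> exp (- K * ln x) * (real (d choose r) * 2 ^ r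
                  * ((real n - 2) ^ (d - r) * exp (real (d - r) * (x - 1) / (real n - 2))))"
    using assms(1,4) by (intro mult_left_mono power_le_exp_mult) auto
  also have "\<dots> = real (card (tau1_layer n d r)) * exp (real (d - r) * (x - 1) / (real n - 2) - K * ln x)"
    using assms(1) by (simp add: card_tau1_layer algebra_simps flip: exp_add)
  finally show ?thesis .
qed

lemma ln_1_01_ge: "0.00994 \<le> ln (1.01 :: real)"
proof -
  have "exp (0.000994 :: real) \<le> 1 + 0.000994 + 0.000994 ^ 2"
    by (rule exp_bound) auto
  then have "exp (0.000994 :: real) ^ 10 \<le> (1 + 0.000994 + 0.000994 ^ 2) ^ 10"
    by (intro power_mono) auto
  moreover have "exp (0.000994 :: real) ^ 10 = exp 0.00994"
    by (simp flip: exp_of_nat_mult)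
  moreover have "(1 + 0.000994 + (0.000994 :: real) ^ 2) ^ 10 \<le> 1.01"
    by (simp add: power_divide)
  ultimately have "exp (0.00994 :: real) \<le> 1.01"
    by linarith
  then show ?thesis
    by (subst ln_ge_iff) auto
qed

lemma ln_0_99_ge: "- 0.01006 \<le> ln (0.99 :: real)"
proof -
  have "1 \<le> (1 + 0.01006 + (0.01006 :: real) ^ 2 / 2) * 0.99"
    by (simp add: power2_eq_square)
  also have "\<dots> \<le> exp 0.01006 * 0.99"
    by (intro mult_right_mono exp_lower_Taylor_quadratic) auto
  finally have "exp (- 0.01006 :: real) \<le> 0.99"
    by (simp add: exp_minus field_simps)
  then show ?thesis
    by (subst ln_ge_iff) auto
qed

lemma card_pi_cnt_below:
  fixes n d r i :: nat
  assumes "n \<ge> 3" "1 < i" "i < n"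
  defines "\<mu> \<equiv> real (d - r) / (real n - 2)"
  shows "real (card {p \<in> tau1_layer n d r. real (pi_cnt d p i) < 0.99 * \<mu>})
           \<le> real (card (tau1_layer n d r)) * exp (- 0.0000406 * \<mu>)"
proof -
  have "\<mu> \<ge> 0"
    using assms(1) by (simp add: \<mu>_def)
  have "real (card {p \<in> tau1_layer n d r. real (pi_cnt d p i) < 0.99 * \<mu>})
      \<le> real (card (tau1_layer n d r)) * exp (real (d - r) * (0.99 - 1) / (real n - 2) - 0.99 * \<mu> * ln 0.99)"
  proof (rule card_pi_cnt_tail[OF assms(1-3)])
    fix p assume "p \<in> {p \<in> tau1_layer n d r. real (pi_cnt d p i) < 0.99 * \<mu>}"
    then show "0 \<le> (real (pi_cnt d p i) - 0.99 * \<mu>) * ln 0.99"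
      by (intro mult_nonpos_nonpos) auto
  qed auto
  also have "\<dots> \<le> real (card (tau1_layer n d r)) * exp (- 0.0000406 * \<mu>)"
  proof (intro mult_left_mono exp_mono)
    have "real (d - r) * (0.99 - 1) / (real n - 2) = - 0.01 * \<mu>"
      by (simp add: \<mu>_def)
    moreover have "0.99 * \<mu> * (- 0.01006) \<le> 0.99 * \<mu> * ln 0.99"
      using ln_0_99_ge \<open>\<mu> \<ge> 0\<close> by (intro mult_left_mono) auto
    ultimately show "real (d - r) * (0.99 - 1) / (real n - 2) - 0.99 * \<mu> * ln 0.99 \<le> - 0.0000406 * \<mu>"
      by (simp add: algebra_simps)
  qed simp
  finally show ?thesis .
qed

lemma card_pi_cnt_above:
  fixes n d r i :: nat
  assumes "n \<ge> 3" "1 < i" "i < n"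
  defines "\<mu> \<equiv> real (d - r) / (real n - 2)"
  shows "real (card {p \<in> tau1_layer n d r. 1.01 * \<mu> < real (pi_cnt d p i)})
           \<le> real (card (tau1_layer n d r)) * exp (- 0.0000394 * \<mu>)"
proof -
  have "\<mu> \<ge> 0"
    using assms(1) by (simp add: \<mu>_def)
  have "real (card {p \<in> tau1_layer n d r. 1.01 * \<mu> < real (pi_cnt d p i)})
      \<le> real (card (tau1_layer n d r)) * exp (real (d - r) * (1.01 - 1) / (real n - 2) - 1.01 * \<mu> * ln 1.01)"
  proof (rule card_pi_cnt_tail[OF assms(1-3)])
    fix p assume "p \<in> {p \<in> tau1_layer n d r. 1.01 * \<mu> < real (pi_cnt d p i)}"
    then show "0 \<le> (real (pi_cnt d p i) - 1.01 * \<mu>) * ln 1.01"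
      by (intro mult_nonneg_nonneg) auto
  qed auto
  also have "\<dots> \<le> real (card (tau1_layer n d r)) * exp (- 0.0000394 * \<mu>)"
  proof (intro mult_left_mono exp_mono)
    have "real (d - r) * (1.01 - 1) / (real n - 2) = 0.01 * \<mu>"
      by (simp add: \<mu>_def)
    moreover have "1.01 * \<mu> * 0.00994 \<le> 1.01 * \<mu> * ln 1.01"
      using ln_1_01_ge \<open>\<mu> \<ge> 0\<close> by (intro mult_left_mono) auto
    ultimately show "real (d - r) * (1.01 - 1) / (real n - 2) - 1.01 * \<mu> * ln 1.01 \<le> - 0.0000394 * \<mu>"
      by (simp add: algebra_simps)
  qed simp
  finally show ?thesis .
qed

lemma card_pi_cnt_deviating:
  fixes n d r i :: nat and E :: real
  assumes "n \<ge> 3" "1 < i" "i < n"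
  defines "\<mu> \<equiv> real (d - r) / (real n - 2)"
  assumes "E \<le> 0.0000394 * \<mu>"
  shows "real (card {p \<in> tau1_layer n d r.
                      real (pi_cnt d p i) < 0.99 * \<mu> \<or> 1.01 * \<mu> < real (pi_cnt d p i)})
           \<le> 2 * exp (- E) * real (card (tau1_layer n d r))"
proof -
  let ?S = "tau1_layer n d r"
  let ?below = "{p \<in> ?S. real (pi_cnt d p i) < 0.99 * \<mu>}"
  let ?above = "{p \<in> ?S. 1.01 * \<mu> < real (pi_cnt d p i)}"
  have "\<mu> \<ge> 0"
    using assms(1) by (simp add: \<mu>_def)
  then have rates: "- 0.0000406 * \<mu> \<le> - E" "- 0.0000394 * \<mu> \<le> - E"
    using assms(5) by (simp_all add: algebra_simps)
  have "{p \<in> ?S. real (pi_cnt d p i) < 0.99 * \<mu> \<or> 1.01 * \<mu> < real (pi_cnt d p i)} = ?below \<union> ?above"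
    by blast
  then have "card {p \<in> ?S. real (pi_cnt d p i) < 0.99 * \<mu> \<or> 1.01 * \<mu> < real (pi_cnt d p i)}
      \<le> card ?below + card ?above"
    by (simp add: card_Un_le)
  then have "real (card {p \<in> ?S. real (pi_cnt d p i) < 0.99 * \<mu> \<or> 1.01 * \<mu> < real (pi_cnt d p i)})
      \<le> real (card ?below) + real (card ?above)"
    by (simp only: of_nat_le_iff flip: of_nat_add)
  also have "\<dots> \<le> real (card ?S) * exp (- 0.0000406 * \<mu>) + real (card ?S) * exp (- 0.0000394 * \<mu>)"
    using card_pi_cnt_below[OF assms(1-3)] card_pi_cnt_above[OF assms(1-3)]
    unfolding \<mu>_def by (rule add_mono)
  also have "\<dots> \<le> real (card ?S) * exp (- E) + real (card ?S) * exp (- E)"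
    using rates by (intro add_mono mult_left_mono) auto
  finally show ?thesis
    by (simp add: algebra_simps)
qed

lemma tau1_layer_subset_balanced_Un_deviating:
  fixes n d r :: nat
  assumes "r \<le> d"
  defines "\<mu> \<equiv> real (d - r) / (real n - 2)"
  shows "tau1_layer n d r \<subseteq> {p \<in> tau1_layer n d r. balanced n d p} \<union>
    (\<Union>i \<in> {2..<n}. {p \<in> tau1_layer n d r.
                       real (pi_cnt d p i) < 0.99 * \<mu> \<or> 1.01 * \<mu> < real (pi_cnt d p i)})"
proof
  fix p assume p: "p \<in> tau1_layer n d r"
  have "(real d - real (tau1 n d p)) / (real n - 2) = \<mu>"
    using p assms(1) by (simp add: tau1_layer_def of_nat_diff \<mu>_def)
  then have bounds: "0.99 * (real d - real (tau1 n d p)) / (real n - 2) = 0.99 * \<mu>"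
    "1.01 * (real d - real (tau1 n d p)) / (real n - 2) = 1.01 * \<mu>"
    by (simp_all only: times_divide_eq_right[symmetric])
  show "p \<in> {p \<in> tau1_layer n d r. balanced n d p} \<union>
    (\<Union>i \<in> {2..<n}. {p \<in> tau1_layer n d r.
                       real (pi_cnt d p i) < 0.99 * \<mu> \<or> 1.01 * \<mu> < real (pi_cnt d p i)})"
  proof (cases "balanced n d p")
    case False
    then obtain i where "1 < i" "i < n"
      and outside: "\<not> (0.99 * (real d - real (tau1 n d p)) / (real n - 2) \<le> real (pi_cnt d p i) \<and>
                        real (pi_cnt d p i) \<le> 1.01 * (real d - real (tau1 n d p)) / (real n - 2))"
      unfolding balanced_def by blast
    have "real (pi_cnt d p i) < 0.99 * \<mu> \<or> 1.01 * \<mu> < real (pi_cnt d p i)"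
      using outside unfolding bounds by linarith
    moreover have "i \<in> {2..<n}"
      using \<open>1 < i\<close> \<open>i < n\<close> by simp
    ultimately show ?thesis
      using p by blast
  qed (use p in blast)
qed

lemma card_balanced_ge:
  fixes n d r :: nat and E :: real
  assumes "n \<ge> 3" "r \<le> d" "E \<le> 0.0000394 * (real (d - r) / (real n - 2))"
  shows "(1 - 2 * (real n - 2) * exp (- E)) * real (card (tau1_layer n d r))
           \<le> real (card {p \<in> tau1_layer n d r. balanced n d p})"
proof -
  let ?S = "tau1_layer n d r"
  define \<mu> where "\<mu> = real (d - r) / (real n - 2)"
  define Dev where "Dev i = {p \<in> ?S. real (pi_cnt d p i) < 0.99 * \<mu> \<or> 1.01 * \<mu> < real (pi_cnt d p i)}"
    for i
  have "card ?S \<le> card ({p \<in> ?S. balanced n d p} \<union> (\<Union>i \<in> {2..<n}. Dev i))"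
    using tau1_layer_subset_balanced_Un_deviating[OF assms(2)] finite_tau1_layer
    unfolding Dev_def \<mu>_def by (intro card_mono) auto
  also have "\<dots> \<le> card {p \<in> ?S. balanced n d p} + card (\<Union>i \<in> {2..<n}. Dev i)"
    by (rule card_Un_le)
  also have "card (\<Union>i \<in> {2..<n}. Dev i) \<le> (\<Sum>i \<in> {2..<n}. card (Dev i))"
    by (rule card_UN_le) simp
  finally have "real (card ?S) \<le> real (card {p \<in> ?S. balanced n d p}) + (\<Sum>i \<in> {2..<n}. real (card (Dev i)))"
    by (simp flip: of_nat_sum)
  also have "(\<Sum>i \<in> {2..<n}. real (card (Dev i))) \<le> (\<Sum>i \<in> {2..<n}. 2 * exp (- E) * real (card ?S))"
    using card_pi_cnt_deviating[OF assms(1)] assms(3) unfolding Dev_def \<mu>_def by (intro sum_mono) auto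
  also have "\<dots> = (real n - 2) * (2 * exp (- E) * real (card ?S))"
    using assms(1) by (simp add: of_nat_diff)
  finally show ?thesis
    by (simp add: algebra_simps)
qed

lemma deviation_rate_ge:
  fixes N D R :: real
  assumes "N \<ge> 3" "0 \<le> R" "R < 4.29 * D / (N + 2)"
  shows "R < D" "D / (40000 * (N + 2)) \<le> 0.0000394 * ((D - R) / (N - 2))"
proof -
  have small: "100 * (R * (N + 2)) < 429 * D"
    using assms by (simp add: field_simps)
  have "R * 5 \<le> R * (N + 2)"
    using assms(1,2) by (intro mult_left_mono) auto
  with small assms(2) show "R < D"
    by linarith
  then have "D * 3 \<le> D * N"
    using assms(1,2) by (intro mult_left_mono) auto
  moreover have "1576 * (D - R) * (N + 2) - 1000 * (D * (N - 2))
      = 576 * (D * N) + 5152 * D - 1576 * (R * N) - 3152 * R"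
    by (simp add: algebra_simps)
  moreover have "100 * (R * N) + 200 * R < 429 * D"
    using small by (simp add: algebra_simps)
  ultimately have "1000 * (D * (N - 2)) \<le> 1576 * (D - R) * (N + 2)"
    using \<open>R < D\<close> assms(2) by linarith
  then show "D / (40000 * (N + 2)) \<le> 0.0000394 * ((D - R) / (N - 2))"
    using assms(1) by (simp add: field_simps)
qed

lemma one_sub_two_mult_exp_mult_le:
  fixes D M E C G :: real
  assumes "D \<ge> 1" "0 \<le> C" "0 \<le> G" "D < M \<Longrightarrow> E \<le> 1 / 2"
    and "(1 - 2 * M * exp (- E)) * C \<le> G"
  shows "(1 - 2 * D * exp (- E)) * C \<le> G"
proof (cases "M \<le> D")
  case True
  then have "(1 - 2 * D * exp (- E)) * C \<le> (1 - 2 * M * exp (- E)) * C"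
    using assms(2) by (intro mult_right_mono) auto
  with assms(5) show ?thesis
    by linarith
next
  case False
  then have "1 / 2 \<le> exp (- E)"
    using exp_ge_add_one_self[of "- E"] assms(4) by linarith
  then have "1 * (1 / 2) \<le> D * exp (- E)"
    using assms(1) by (intro mult_mono) auto
  then have "(1 - 2 * D * exp (- E)) * C \<le> 0"
    using assms(2) by (simp add: mult_nonpos_nonneg)
  with assms(3) show ?thesis
    by linarith
qed

theorem lemma22:
  fixes n d r :: nat and c :: real
  assumes "n \<ge> 3" and "d \<ge> 1"
    and "c = 3.9 * real d / (real n + 2)"
    and "c < real r" and "real r < 1.1 * c"
  shows "real (card {p. counter_point n d c p \<and> tau1 n d p = r})
         \<ge> (1 - 2 * real d * exp (- real d / (40000 * (real n + 2))))
            * real (d choose r) * 2 ^ r * (real n - 2) ^ (d - r)"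
proof -
  let ?S = "tau1_layer n d r"
  define E where "E = real d / (40000 * (real n + 2))"
  have "real r < 4.29 * real d / (real n + 2)"
    using assms(3,5) by simp
  then have "real r < real d" "E \<le> 0.0000394 * ((real d - real r) / (real n - 2))"
    using deviation_rate_ge[of "real n" "real r" "real d"] assms(1) by (simp_all add: E_def)
  then have "r \<le> d" "E \<le> 0.0000394 * (real (d - r) / (real n - 2))"
    by (simp_all add: of_nat_diff)
  then have balanced_ge:
    "(1 - 2 * (real n - 2) * exp (- E)) * real (card ?S) \<le> real (card {p \<in> ?S. balanced n d p})"
    using assms(1) by (intro card_balanced_ge)
  have "(1 - 2 * real d * exp (- E)) * real (card ?S) \<le> real (card {p \<in> ?S. balanced n d p})"
    by (rule one_sub_two_mult_exp_mult_le[OF _ _ _ _ balanced_ge]) (use assms(2) in \<open>auto simp: E_def field_simps\<close>)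
  moreover have "{p. counter_point n d c p \<and> tau1 n d p = r} = {p \<in> ?S. balanced n d p}"
    using assms(4,5) by (auto simp: counter_point_iff tau1_layer_def)
  ultimately show ?thesis
    using card_tau1_layer[of n d r] assms(1) by (simp add: E_def mult.assoc)
qed

end
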